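(* Let $s\in[\tfrac12,1)$. Define $\phi_s:\tilde\Delta\to\tilde\Delta$, using the fundamental parallelogram $P$ with vertices $\pm(-3/2,\sqrt3/2)$, $\pm(1/2,\sqrt3/2)$ to represent points, by \[ \phi_s(x,y)=\begin{cases}(x,y)+(\tfrac12,-\tfrac{\sqrt3}{2}) & \text{if } y\ge 0,\\ (x,y)+(-\tfrac12,\tfrac{\sqrt3}{2}) & \text{if } y<0,\end{cases} \] taken modulo $\Lambda$. Then $\phi_s$ conjugates $\tilde f_s$ to $\tilde f_{1-s}$, i.e. $\phi_s\circ\tilde f_s=\tilde f_{1-s}\circ\phi_s$.
   Context: Let $\Lambda\subset\mathbb{R}^2$ be the lattice generated by $(2,0)$ and $(1,-\sqrt3)$, and let $\tilde\Delta=\mathbb{R}^2/\Lambda$. Subsets of $\mathbb{R}^2$ are regarded as subsets of $\tilde\Delta$ via the projection. Let $A_0$ be the equilateral triangle with vertices $a_1=(-1,0)$, $a_2=(-\tfrac12,\tfrac{\sqrt3}{2})$, $a_3=(0,0)$, and for $n=1,2,3$ let $A_n$ be the reflection of $A_0$ in the line through $a_n$ and $a_{n+1 \bmod 3}$. Let $\iota(x,y)=(-x,-y)$. Let $\omega_0=(1,0)$, $\omega_1=(-\tfrac12,\tfrac{\sqrt3}{2})$, $\omega_2=(-\tfrac12,-\tfrac{\sqrt3}{2})$. For a parameter $u\in(0,1)$ and $i\in\{0,1,2\}$ define $\tilde f_i(x,y)=(x,y)+\sigma_i u\,\omega_i \bmod \Lambda$, where $\sigma_i=1$ if $(x,y)\in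 \bigcup_{\alpha\ne 3-i}A_\alpha\cup\iota(A_{3-i})$ and $\sigma_i=-1$ otherwise; the tetrahedral PET is $\tilde f_u=\tilde f_2\circ\tilde f_1\circ\tilde f_0$. It is a piecewise translation, undefined on the boundaries of the pieces where it is discontinuous; the conjugacy identity is understood where both sides are defined. *)

theory Defs
  imports "HOL-Analysis.Analysis"
begin

text \<open>Points of the plane are pairs of reals; the torus is the plane modulo the lattice Lambda.
  All maps are defined on representatives in the plane; identities on the torus are
  stated as congruences modulo Lambda.\<close>

definition Lambda :: "(real \<times> real) set" where
  "Lambda = {of_int a *\<^sub>R (2, 0) + of_int b *\<^sub>R (1, - sqrt 3) | a b. True}"

text \<open>Membership of a plane point in the projection of a plane set S to the torus.\<close>
definition torus_mem :: "real \<times> real \<Rightarrow> (real \<times> real) set \<Rightarrow> bool" where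
  "torus_mem p S \<longleftrightarrow> (\<exists>q\<in>S. p - q \<in> Lambda)"

definition vert :: "nat \<Rightarrow> real \<times> real" where
  "vert n = (if n = 1 then (-1, 0) else if n = 2 then (-1/2, sqrt 3 / 2) else (0, 0))"

definition reflect_line :: "real \<times> real \<Rightarrow> real \<times> real \<Rightarrow> real \<times> real \<Rightarrow> real \<times> real" where
  "reflect_line a b p = a + (2 * (((p - a) \<bullet> (b - a)) / ((b - a) \<bullet> (b - a)))) *\<^sub>R (b - a) - (p - a)"

definition A :: "nat \<Rightarrow> (real \<times> real) set" where
  "A n = (if n = 0 then convex hull {vert 1, vert 2, vert 3}
          else reflect_line (vert n) (vert (n mod 3 + 1)) ` (convex hull {vert 1, vert 2, vert 3}))"

definition iota :: "real \<times> real \<Rightarrow> real \<times> real" where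
  "iota p = - p"

definition omega :: "nat \<Rightarrow> real \<times> real" where
  "omega i = (if i = 0 then (1, 0) else if i = 1 then (-1/2, sqrt 3 / 2) else (-1/2, - sqrt 3 / 2))"

definition sigma :: "nat \<Rightarrow> real \<times> real \<Rightarrow> real" where
  "sigma i p = (if torus_mem p ((\<Union>\<alpha>\<in>{0,1,2,3::nat} - {3 - i}. A \<alpha>) \<union> iota ` A (3 - i))
                then 1 else -1)"

definition ftil :: "real \<Rightarrow> nat \<Rightarrow> real \<times> real \<Rightarrow> real \<times> real" where
  "ftil u i p = p + (sigma i p * u) *\<^sub>R omega i"

definition pet :: "real \<Rightarrow> real \<times> real \<Rightarrow> real \<times> real" where
  "pet u = ftil u 2 \<circ> ftil u 1 \<circ> ftil u 0"

text \<open>The piecewise translation is defined at p iff it is a translation (modulo Lambda)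
  on a neighbourhood of p, i.e. p is not on a discontinuity boundary.\<close>
definition pet_defined :: "real \<Rightarrow> real \<times> real \<Rightarrow> bool" where
  "pet_defined u p \<longleftrightarrow> (\<exists>e>0. \<exists>t. \<forall>q\<in>ball p e. pet u q - q - t \<in> Lambda)"

definition Pfund :: "(real \<times> real) set" where
  "Pfund = convex hull {(-3/2, sqrt 3 / 2), (1/2, sqrt 3 / 2), (3/2, - sqrt 3 / 2), (-1/2, - sqrt 3 / 2)}"

definition phi :: "real \<Rightarrow> real \<times> real \<Rightarrow> real \<times> real" where
  "phi s p = (let q = (SOME q. q \<in> Pfund \<and> p - q \<in> Lambda) in
      if snd q \<ge> 0 then q + (1/2, - sqrt 3 / 2) else q + (-1/2, sqrt 3 / 2))"

end

theory Submission
  imports Defs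
begin

text \<open>In oblique coordinates (a, b) the lattice \<open>\<Lambda>\<close> is \<open>2\<int> \<times> 2\<int>\<close> and the triangles \<open>A\<^sub>\<alpha>\<close>,
  \<open>\<iota>(A\<^sub>\<alpha>)\<close> are cells of the grid of lines \<open>a \<in> \<int>\<close>, \<open>b \<in> \<int>\<close>, \<open>a + b \<in> \<int>\<close>; off these lines
  \<open>\<sigma>\<^sub>0, \<sigma>\<^sub>1, \<sigma>\<^sub>2\<close> are parities of \<open>\<lfloor>b\<rfloor>, \<lfloor>a + b\<rfloor>, \<lfloor>a\<rfloor>\<close>. Modulo \<open>\<Lambda>\<close>, \<open>\<phi>\<^sub>s\<close> is translation by
  \<open>c = (1/2, -\<surd>3/2)\<close>, which is (1, -1) in oblique coordinates. Follow a generic point q and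
  q + c through the three steps: at each step the two points differ by an integer vector that
  is odd in the coordinate governing the next sign, so the signs are opposite, and a step
  \<open>-\<sigma> (1 - s) \<omega>\<^sub>i\<close> equals \<open>\<sigma> s \<omega>\<^sub>i - \<sigma> \<omega>\<^sub>i\<close>. Hence the orbits end
  \<open>c - (\<sigma>\<^sub>0 \<omega>\<^sub>0 + \<sigma>\<^sub>1 \<omega>\<^sub>1 + \<sigma>\<^sub>2 \<omega>\<^sub>2)\<close> apart, which is c modulo \<open>\<Lambda>\<close> because all
  \<open>\<sigma>\<^sub>i = \<plusminus>1\<close>. Where both maps are defined they are local translations, so the identity
  passes from nearby generic points to every point.\<close>

text \<open>Oblique coordinates with respect to the basis (1, 0), \<open>(1/2, \<surd>3/2)\<close>.\<close>

definition coord_a :: "real \<times> real \<Rightarrow> real" where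
  "coord_a p = fst p - snd p / sqrt 3"

definition coord_b :: "real \<times> real \<Rightarrow> real" where
  "coord_b p = 2 * snd p / sqrt 3"

definition tri_point :: "real \<Rightarrow> real \<Rightarrow> real \<times> real" where
  "tri_point a b = (a + b / 2, sqrt 3 * b / 2)"

lemma coord_tri_point [simp]:
  "coord_a (tri_point a b) = a" "coord_b (tri_point a b) = b"
  by (simp_all add: coord_a_def coord_b_def tri_point_def)

lemma tri_point_coords: "tri_point (coord_a p) (coord_b p) = p"
  by (cases p) (simp add: coord_a_def coord_b_def tri_point_def field_simps)

lemma eq_iff_coords: "p = q \<longleftrightarrow> coord_a p = coord_a q \<and> coord_b p = coord_b q"
  by (metis tri_point_coords)

lemma tri_point_eq_iff: "tri_point a b = tri_point c d \<longleftrightarrow> a = c \<and> b = d"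
  by (metis coord_tri_point)

lemma coords_Pair: "coord_a (x, y) = x - y / sqrt 3" "coord_b (x, y) = 2 * y / sqrt 3"
  by (simp_all add: coord_a_def coord_b_def)

lemma coords_add [simp]:
  "coord_a (p + q) = coord_a p + coord_a q" "coord_b (p + q) = coord_b p + coord_b q"
  by (simp_all add: coord_a_def coord_b_def field_simps)

lemma coords_diff [simp]:
  "coord_a (p - q) = coord_a p - coord_a q" "coord_b (p - q) = coord_b p - coord_b q"
  by (simp_all add: coord_a_def coord_b_def field_simps)

lemma coords_uminus [simp]:
  "coord_a (- p) = - coord_a p" "coord_b (- p) = - coord_b p"
  by (simp_all add: coord_a_def coord_b_def)

lemma coords_scaleR [simp]:
  "coord_a (r *\<^sub>R p) = r * coord_a p" "coord_b (r *\<^sub>R p) = r * coord_b p"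
  by (simp_all add: coord_a_def coord_b_def field_simps)

lemma coords_omega [simp]:
  "coord_a (omega i) = (if i = 0 then 1 else if i = 1 then -1 else 0)"
  "coord_b (omega i) = (if i = 0 then 0 else if i = 1 then 1 else -1)"
  by (simp_all add: omega_def coord_a_def coord_b_def)

lemma mem_Lambda_iff:
  "x \<in> Lambda \<longleftrightarrow> (\<exists>i j::int. coord_a x = 2 * of_int i \<and> coord_b x = 2 * of_int j)"
proof
  assume "x \<in> Lambda"
  then obtain a b :: int where x: "x = of_int a *\<^sub>R (2, 0) + of_int b *\<^sub>R (1, - sqrt 3)"
    by (auto simp: Lambda_def)
  show "\<exists>i j::int. coord_a x = 2 * of_int i \<and> coord_b x = 2 * of_int j"
    by (rule exI[of _ "a + b"], rule exI[of _ "- b"]) (simp add: x coord_a_def coord_b_def)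
next
  assume "\<exists>i j::int. coord_a x = 2 * of_int i \<and> coord_b x = 2 * of_int j"
  then obtain i j :: int where ij: "coord_a x = 2 * of_int i" "coord_b x = 2 * of_int j"
    by blast
  have "x = of_int (i + j) *\<^sub>R (2, 0) + of_int (- j) *\<^sub>R (1, - sqrt 3)"
    by (subst eq_iff_coords) (simp add: ij coords_Pair algebra_simps)
  then show "x \<in> Lambda"
    unfolding Lambda_def by blast
qed

lemma Lambda_add: "x \<in> Lambda \<Longrightarrow> y \<in> Lambda \<Longrightarrow> x + y \<in> Lambda"
  unfolding mem_Lambda_iff by (metis coords_add distrib_left of_int_add)

lemma Lambda_diff: "x \<in> Lambda \<Longrightarrow> y \<in> Lambda \<Longrightarrow> x - y \<in> Lambda"
  unfolding mem_Lambda_iff by (metis coords_diff right_diff_distrib of_int_diff)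

lemma Lambda_uminus: "x \<in> Lambda \<Longrightarrow> - x \<in> Lambda"
  unfolding mem_Lambda_iff by (metis coords_uminus mult_minus_right of_int_minus)

definition up_triangle :: "int \<Rightarrow> int \<Rightarrow> (real \<times> real) set" where
  "up_triangle n m = convex hull
     {tri_point (of_int n) (of_int m), tri_point (of_int n + 1) (of_int m),
      tri_point (of_int n) (of_int m + 1)}"

definition down_triangle :: "int \<Rightarrow> int \<Rightarrow> (real \<times> real) set" where
  "down_triangle n m = convex hull
     {tri_point (of_int n + 1) (of_int m), tri_point (of_int n) (of_int m + 1),
      tri_point (of_int n + 1) (of_int m + 1)}"

lemma mem_up_triangle_iff:
  "p \<in> up_triangle n m \<longleftrightarrow>
     of_int n \<le> coord_a p \<and> of_int m \<le> coord_b p \<and> coord_a p + coord_b p \<le> of_int (n + m + 1)"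
    (is "_ \<longleftrightarrow> ?ineqs")
proof
  assume "p \<in> up_triangle n m"
  then obtain u v w where "0 \<le> u" "0 \<le> v" "0 \<le> w" "u + v + w = 1"
    and p: "p = u *\<^sub>R tri_point n m + v *\<^sub>R tri_point (of_int n + 1) m
              + w *\<^sub>R tri_point n (of_int m + 1)"
    unfolding up_triangle_def convex_hull_3 by blast
  have "coord_a p = (u + v + w) * n + v" "coord_b p = (u + v + w) * m + w"
    by (simp_all add: p algebra_simps)
  then show ?ineqs
    using \<open>0 \<le> u\<close> \<open>0 \<le> v\<close> \<open>0 \<le> w\<close> \<open>u + v + w = 1\<close> by simp
next
  assume ?ineqs
  define v w where "v = coord_a p - n" and "w = coord_b p - m"
  have "p = (1 - v - w) *\<^sub>R tri_point n m + v *\<^sub>R tri_point (of_int n + 1) m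
      + w *\<^sub>R tri_point n (of_int m + 1)"
    by (subst eq_iff_coords) (simp add: v_def w_def algebra_simps)
  then show "p \<in> up_triangle n m"
    unfolding up_triangle_def convex_hull_3 using \<open>?ineqs\<close>
    by (intro CollectI exI[of _ "1 - v - w"] exI[of _ v] exI[of _ w]) (auto simp: v_def w_def)
qed

lemma mem_down_triangle_iff:
  "p \<in> down_triangle n m \<longleftrightarrow>
     coord_a p \<le> of_int n + 1 \<and> coord_b p \<le> of_int m + 1 \<and> of_int (n + m + 1) \<le> coord_a p + coord_b p"
    (is "_ \<longleftrightarrow> ?ineqs")
proof
  assume "p \<in> down_triangle n m"
  then obtain u v w where "0 \<le> u" "0 \<le> v" "0 \<le> w" "u + v + w = 1"
    and p: "p = u *\<^sub>R tri_point (of_int n + 1) m + v *\<^sub>R tri_point n (of_int m + 1)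
              + w *\<^sub>R tri_point (of_int n + 1) (of_int m + 1)"
    unfolding down_triangle_def convex_hull_3 by blast
  have "coord_a p = (u + v + w) * (n + 1) - v" "coord_b p = (u + v + w) * (m + 1) - u"
    by (simp_all add: p algebra_simps)
  then show ?ineqs
    using \<open>0 \<le> u\<close> \<open>0 \<le> v\<close> \<open>0 \<le> w\<close> \<open>u + v + w = 1\<close> by simp
next
  assume ?ineqs
  define u v where "u = m + 1 - coord_b p" and "v = n + 1 - coord_a p"
  have "p = u *\<^sub>R tri_point (of_int n + 1) m + v *\<^sub>R tri_point n (of_int m + 1)
      + (1 - u - v) *\<^sub>R tri_point (of_int n + 1) (of_int m + 1)"
    by (subst eq_iff_coords) (simp add: u_def v_def algebra_simps)
  then show "p \<in> down_triangle n m"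
    unfolding down_triangle_def convex_hull_3 using \<open>?ineqs\<close>
    by (intro CollectI exI[of _ u] exI[of _ v] exI[of _ "1 - u - v"]) (auto simp: u_def v_def)
qed

lemma reflect_line_convex_hull:
  "reflect_line a b ` (convex hull S) = convex hull (reflect_line a b ` S)"
proof -
  define d where "d = b - a"
  have lin: "linear (\<lambda>v. (2 * (v \<bullet> d / (d \<bullet> d))) *\<^sub>R d - v)"
    by (rule linearI) (simp_all add: inner_add_left add_divide_distrib scaleR_add_left algebra_simps)
  have "reflect_line a b = (\<lambda>x. a + x) \<circ> (\<lambda>v. (2 * (v \<bullet> d / (d \<bullet> d))) *\<^sub>R d - v) \<circ> (\<lambda>x. - a + x)"
    by (simp add: reflect_line_def d_def fun_eq_iff)
  then show ?thesis
    by (simp only: image_comp [symmetric] convex_hull_translation [symmetric]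
        convex_hull_linear_image [OF lin])
qed

lemma reflect_line_fixes:
  "reflect_line a b a = a" "a \<noteq> b \<Longrightarrow> reflect_line a b b = b"
  by (simp_all add: reflect_line_def scaleR_2)

lemma vert_tri_point:
  "vert 1 = tri_point (-1) 0" "vert 2 = tri_point (-1) 1" "vert 3 = tri_point 0 0"
  "vert (Suc 0) = tri_point (-1) 0" "vert (Suc (Suc 0)) = tri_point (-1) 1"
  by (simp_all add: vert_def tri_point_def)

lemma A_triangles:
  "A 0 = up_triangle (-1) 0" "A 1 = down_triangle (-2) 0"
  "A 2 = down_triangle (-1) 0" "A 3 = down_triangle (-1) (-1)"
proof -
  have "reflect_line (tri_point (-1) 0) (tri_point (-1) 1) (tri_point 0 0) = tri_point (-2) 1"
       "reflect_line (tri_point (-1) 1) (tri_point 0 0) (tri_point (-1) 0) = tri_point 0 1"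
       "reflect_line (tri_point 0 0) (tri_point (-1) 0) (tri_point (-1) 1) = tri_point 0 (-1)"
    by (simp_all add: reflect_line_def tri_point_def inner_prod_def field_simps)
  then show "A 0 = up_triangle (-1) 0" "A 1 = down_triangle (-2) 0"
    "A 2 = down_triangle (-1) 0" "A 3 = down_triangle (-1) (-1)"
    by (simp_all add: A_def up_triangle_def down_triangle_def vert_tri_point
        reflect_line_convex_hull reflect_line_fixes tri_point_eq_iff insert_commute)
qed

lemma iota_A_triangles:
  "iota ` A 0 = down_triangle 0 (-1)" "iota ` A 1 = up_triangle 1 (-1)"
  "iota ` A 2 = up_triangle 0 (-1)" "iota ` A 3 = up_triangle 0 0"
proof -
  have "iota ` (convex hull S) = convex hull (iota ` S)" for S
    unfolding iota_def by (rule convex_hull_linear_image) (rule linear_uminus)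
  moreover have "iota (tri_point a b) = tri_point (- a) (- b)" for a b
    by (simp add: iota_def tri_point_def)
  ultimately show "iota ` A 0 = down_triangle 0 (-1)" "iota ` A 1 = up_triangle 1 (-1)"
    "iota ` A 2 = up_triangle 0 (-1)" "iota ` A 3 = up_triangle 0 0"
    unfolding A_triangles by (simp_all add: up_triangle_def down_triangle_def insert_commute)
qed

definition generic :: "real \<times> real \<Rightarrow> bool" where
  "generic q \<longleftrightarrow> coord_a q \<notin> \<int> \<and> coord_b q \<notin> \<int> \<and> coord_a q + coord_b q \<notin> \<int>"

lemma le_of_int_iff_floor_less: "(x::real) \<notin> \<int> \<Longrightarrow> x \<le> of_int k \<longleftrightarrow> \<lfloor>x\<rfloor> < k"
  by (metis Ints_of_int floor_less_iff order_le_less)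

lemma floor_add_cases: "\<lfloor>x + y\<rfloor> = \<lfloor>x\<rfloor> + \<lfloor>y\<rfloor> \<or> \<lfloor>x + y\<rfloor> = \<lfloor>x\<rfloor> + \<lfloor>y::real\<rfloor> + 1"
  by (simp add: floor_add)

lemma torus_mem_iff_coords:
  "torus_mem q S \<longleftrightarrow>
     (\<exists>i j::int. tri_point (coord_a q - 2 * of_int i) (coord_b q - 2 * of_int j) \<in> S)"
proof
  assume "torus_mem q S"
  then obtain r where r: "r \<in> S" "q - r \<in> Lambda"
    unfolding torus_mem_def by blast
  then obtain i j :: int where "coord_a (q - r) = 2 * of_int i" "coord_b (q - r) = 2 * of_int j"
    unfolding mem_Lambda_iff by blast
  then have "r = tri_point (coord_a q - 2 * of_int i) (coord_b q - 2 * of_int j)"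
    by (subst eq_iff_coords) simp
  then show "\<exists>i j::int. tri_point (coord_a q - 2 * of_int i) (coord_b q - 2 * of_int j) \<in> S"
    using r by blast
next
  assume "\<exists>i j::int. tri_point (coord_a q - 2 * of_int i) (coord_b q - 2 * of_int j) \<in> S"
  then obtain i j :: int where r: "tri_point (coord_a q - 2 * of_int i) (coord_b q - 2 * of_int j) \<in> S"
    by blast
  have "q - tri_point (coord_a q - 2 * of_int i) (coord_b q - 2 * of_int j) \<in> Lambda"
    unfolding mem_Lambda_iff by simp
  then show "torus_mem q S"
    using r unfolding torus_mem_def by blast
qed

lemma torus_mem_un: "torus_mem p (S \<union> T) \<longleftrightarrow> torus_mem p S \<or> torus_mem p T"
  unfolding torus_mem_def by blast

lemma torus_mem_up_triangle:
  assumes "generic q"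
  shows "torus_mem q (up_triangle n m) \<longleftrightarrow>
     even (\<lfloor>coord_a q\<rfloor> - n) \<and> even (\<lfloor>coord_b q\<rfloor> - m) \<and>
     \<lfloor>coord_a q + coord_b q\<rfloor> = \<lfloor>coord_a q\<rfloor> + \<lfloor>coord_b q\<rfloor>"
proof -
  have sum: "coord_a q + coord_b q \<notin> \<int>"
    using assms by (simp add: generic_def)
  have "tri_point (coord_a q - 2 * of_int i) (coord_b q - 2 * of_int j) \<in> up_triangle n m \<longleftrightarrow>
     n + 2 * i \<le> \<lfloor>coord_a q\<rfloor> \<and> m + 2 * j \<le> \<lfloor>coord_b q\<rfloor> \<and>
     \<lfloor>coord_a q + coord_b q\<rfloor> < n + m + 1 + 2 * i + 2 * j" for i j
    unfolding mem_up_triangle_iff coord_tri_point le_floor_iff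
      le_of_int_iff_floor_less [OF sum, symmetric]
    by (simp add: algebra_simps)
  then show ?thesis
    unfolding torus_mem_iff_coords using floor_add_cases [of "coord_a q" "coord_b q"] by presburger
qed

lemma torus_mem_down_triangle:
  assumes "generic q"
  shows "torus_mem q (down_triangle n m) \<longleftrightarrow>
     even (\<lfloor>coord_a q\<rfloor> - n) \<and> even (\<lfloor>coord_b q\<rfloor> - m) \<and>
     \<lfloor>coord_a q + coord_b q\<rfloor> = \<lfloor>coord_a q\<rfloor> + \<lfloor>coord_b q\<rfloor> + 1"
proof -
  have a: "coord_a q \<notin> \<int>" and b: "coord_b q \<notin> \<int>"
    using assms by (simp_all add: generic_def)
  have "tri_point (coord_a q - 2 * of_int i) (coord_b q - 2 * of_int j) \<in> down_triangle n m \<longleftrightarrow>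
     \<lfloor>coord_a q\<rfloor> < n + 1 + 2 * i \<and> \<lfloor>coord_b q\<rfloor> < m + 1 + 2 * j \<and>
     n + m + 1 + 2 * i + 2 * j \<le> \<lfloor>coord_a q + coord_b q\<rfloor>" for i j
    unfolding mem_down_triangle_iff coord_tri_point le_floor_iff
      le_of_int_iff_floor_less [OF a, symmetric] le_of_int_iff_floor_less [OF b, symmetric]
    by (simp add: algebra_simps)
  then show ?thesis
    unfolding torus_mem_iff_coords using floor_add_cases [of "coord_a q" "coord_b q"] by presburger
qed

lemma sigma_generic:
  assumes "generic q"
  shows "sigma 0 q = (if even \<lfloor>coord_b q\<rfloor> then 1 else -1)"
    and "sigma 1 q = (if odd \<lfloor>coord_a q + coord_b q\<rfloor> then 1 else -1)"
    and "sigma 2 q = (if odd \<lfloor>coord_a q\<rfloor> then 1 else -1)"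
proof -
  have pieces:
    "(\<Union>\<alpha>\<in>{0,1,2,3::nat} - {3 - 0}. A \<alpha>) \<union> iota ` A (3 - 0) = A 0 \<union> A 1 \<union> A 2 \<union> iota ` A 3"
    "(\<Union>\<alpha>\<in>{0,1,2,3::nat} - {3 - 1}. A \<alpha>) \<union> iota ` A (3 - 1) = A 0 \<union> A 1 \<union> A 3 \<union> iota ` A 2"
    "(\<Union>\<alpha>\<in>{0,1,2,3::nat} - {3 - 2}. A \<alpha>) \<union> iota ` A (3 - 2) = A 0 \<union> A 2 \<union> A 3 \<union> iota ` A 1"
    by (auto simp: insert_Diff_if)
  note membership = torus_mem_un A_triangles
    torus_mem_up_triangle [OF assms] torus_mem_down_triangle [OF assms]
  note floors = floor_add_cases [of "coord_a q" "coord_b q"]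
  show "sigma 0 q = (if even \<lfloor>coord_b q\<rfloor> then 1 else -1)"
    unfolding sigma_def pieces iota_A_triangles unfolding membership
    by (rule if_cong [OF _ refl refl]) (use floors in presburger)
  show "sigma 1 q = (if odd \<lfloor>coord_a q + coord_b q\<rfloor> then 1 else -1)"
    unfolding sigma_def pieces iota_A_triangles unfolding membership
    by (rule if_cong [OF _ refl refl]) (use floors in presburger)
  show "sigma 2 q = (if odd \<lfloor>coord_a q\<rfloor> then 1 else -1)"
    unfolding sigma_def pieces iota_A_triangles unfolding membership
    by (rule if_cong [OF _ refl refl]) (use floors in presburger)
qed

lemma sigma_sign: "\<exists>e::int. sigma i q = of_int e \<and> (e = 1 \<or> e = -1)"
  unfolding sigma_def by (metis of_int_1 of_int_minus)

lemma ftil_sign: "\<exists>e::int. ftil u i q = q + (of_int e * u) *\<^sub>R omega i"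
  using sigma_sign unfolding ftil_def by metis

lemma sigma_flip:
  assumes "generic q" "coord_a d = of_int k" "coord_b d = of_int l"
  shows "odd l \<Longrightarrow> sigma 0 (q + d) = - sigma 0 q"
    and "odd (k + l) \<Longrightarrow> sigma 1 (q + d) = - sigma 1 q"
    and "odd k \<Longrightarrow> sigma 2 (q + d) = - sigma 2 q"
proof -
  have coords: "coord_a (q + d) = coord_a q + of_int k" "coord_b (q + d) = coord_b q + of_int l"
    "coord_a (q + d) + coord_b (q + d) = (coord_a q + coord_b q) + of_int (k + l)"
    using assms(2,3) by simp_all
  have "generic (q + d)"
    using assms(1) unfolding generic_def coords(3) unfolding coords(1,2)
    by (simp only: add_in_Ints_iff_right Ints_of_int simp_thms)
  have floors: "\<lfloor>coord_a (q + d)\<rfloor> = \<lfloor>coord_a q\<rfloor> + k" "\<lfloor>coord_b (q + d)\<rfloor> = \<lfloor>coord_b q\<rfloor> + l"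
    "\<lfloor>coord_a (q + d) + coord_b (q + d)\<rfloor> = \<lfloor>coord_a q + coord_b q\<rfloor> + (k + l)"
    unfolding coords(3) unfolding coords(1,2) floor_add_int by simp_all
  show "odd l \<Longrightarrow> sigma 0 (q + d) = - sigma 0 q"
    and "odd (k + l) \<Longrightarrow> sigma 1 (q + d) = - sigma 1 q"
    and "odd k \<Longrightarrow> sigma 2 (q + d) = - sigma 2 q"
    unfolding sigma_generic [OF \<open>generic (q + d)\<close>] sigma_generic [OF assms(1)]
    unfolding floors(3) unfolding floors(1,2) by simp_all
qed

lemma ftil_complement:
  "sigma i (q + d) = - sigma i q \<Longrightarrow>
     ftil (1 - u) i (q + d) = ftil u i q + (d - sigma i q *\<^sub>R omega i)"
  by (simp add: ftil_def algebra_simps)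

definition phi_translation :: "real \<times> real" where
  "phi_translation = (1/2, - sqrt 3 / 2)"

lemma coords_phi_translation [simp]:
  "coord_a phi_translation = 1" "coord_b phi_translation = -1"
  by (simp_all add: phi_translation_def coords_Pair)

lemma pet_complement_generic:
  assumes "generic q" "generic (ftil s 0 q)" "generic (ftil s 1 (ftil s 0 q))"
  shows "pet (1 - s) (q + phi_translation) - pet s q - phi_translation \<in> Lambda"
proof -
  define q1 q2 where "q1 = ftil s 0 q" and "q2 = ftil s 1 q1"
  obtain e0 e1 e2 :: int
    where e: "sigma 0 q = of_int e0" "sigma 1 q1 = of_int e1" "sigma 2 q2 = of_int e2"
      and pm: "e0 = 1 \<or> e0 = -1" "e1 = 1 \<or> e1 = -1" "e2 = 1 \<or> e2 = -1"
    using sigma_sign by metis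
  define d1 where "d1 = phi_translation - of_int e0 *\<^sub>R omega 0"
  define d2 where "d2 = d1 - of_int e1 *\<^sub>R omega 1"
  define d3 where "d3 = d2 - of_int e2 *\<^sub>R omega 2"
  have d1: "coord_a d1 = of_int (1 - e0)" "coord_b d1 = of_int (- 1)"
    and d2: "coord_a d2 = of_int (1 - e0 + e1)" "coord_b d2 = of_int (- 1 - e1)"
    and d3: "coord_a (d3 - phi_translation) = of_int (e1 - e0)"
      "coord_b (d3 - phi_translation) = of_int (e2 - e1)"
    by (simp_all add: d1_def d2_def d3_def)
  have "ftil (1 - s) 0 (q + phi_translation) = q1 + d1"
    unfolding q1_def d1_def e(1) [symmetric]
    by (rule ftil_complement, rule sigma_flip(1) [OF assms(1), where k = 1 and l = "-1"]) simp_all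
  moreover have "ftil (1 - s) 1 (q1 + d1) = q2 + d2"
    unfolding q2_def d2_def e(2) [symmetric]
    by (rule ftil_complement, rule sigma_flip(2) [OF _ d1]) (use assms(2) pm in \<open>auto simp: q1_def\<close>)
  moreover have "ftil (1 - s) 2 (q2 + d2) = ftil s 2 q2 + d3"
    unfolding d3_def e(3) [symmetric]
    by (rule ftil_complement, rule sigma_flip(3) [OF _ d2]) (use assms(3) pm in \<open>auto simp: q1_def q2_def\<close>)
  ultimately have pet: "pet (1 - s) (q + phi_translation) = pet s q + d3"
    by (simp add: pet_def q1_def q2_def)
  have "even (e1 - e0)" "even (e2 - e1)"
    using pm by auto
  then obtain i j where "e1 - e0 = 2 * i" "e2 - e1 = 2 * j"
    by (meson evenE)
  then show ?thesis
    unfolding mem_Lambda_iff pet using d3 by (intro exI [of _ i] exI [of _ j]) simp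
qed

lemma torus_mem_translate: "l \<in> Lambda \<Longrightarrow> torus_mem (p + l) S \<longleftrightarrow> torus_mem p S"
  unfolding torus_mem_def
  by (metis Lambda_add Lambda_diff add_diff_cancel_right' diff_add_eq)

lemma sigma_translate: "l \<in> Lambda \<Longrightarrow> sigma i (p + l) = sigma i p"
  unfolding sigma_def by (simp add: torus_mem_translate)

lemma ftil_translate: "l \<in> Lambda \<Longrightarrow> ftil u i (p + l) = ftil u i p + l"
  unfolding ftil_def by (simp only: sigma_translate) (simp add: algebra_simps)

lemma pet_translate: "l \<in> Lambda \<Longrightarrow> pet u (p + l) = pet u p + l"
  unfolding pet_def by (simp add: ftil_translate)

lemma pet_defined_locally_congruent:
  assumes "pet_defined u (p + d)"
  shows "\<exists>e>0. \<forall>q\<in>ball p e. pet u (q + d) - pet u (p + d) - (q - p) \<in> Lambda"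
proof -
  obtain e t where "e > 0" and t: "\<forall>x\<in>ball (p + d) e. pet u x - x - t \<in> Lambda"
    using assms unfolding pet_defined_def by blast
  have "q + d \<in> ball (p + d) e" if "q \<in> ball p e" for q
    using that by (simp add: dist_norm)
  moreover have "pet u (q + d) - pet u (p + d) - (q - p)
      = (pet u (q + d) - (q + d) - t) - (pet u (p + d) - (p + d) - t)" for q
    by (simp add: algebra_simps)
  ultimately show ?thesis
    using \<open>e > 0\<close> t Lambda_diff by (metis centre_in_ball)
qed

lemma parallelogram_in_convex_hull:
  fixes c u v :: "'a::real_vector"
  assumes "0 \<le> x" "x \<le> 1" "0 \<le> y" "y \<le> 1"
  shows "c + x *\<^sub>R u + y *\<^sub>R v \<in> convex hull {c, c + u, c + v, c + u + v}"
proof -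
  let ?H = "convex hull {c, c + u, c + v, c + u + v}"
  have "(1 - x) *\<^sub>R c + x *\<^sub>R (c + u) \<in> ?H" "(1 - x) *\<^sub>R (c + v) + x *\<^sub>R (c + u + v) \<in> ?H"
    using assms by (intro convexD [OF convex_convex_hull] hull_inc; simp)+
  then have "(1 - y) *\<^sub>R ((1 - x) *\<^sub>R c + x *\<^sub>R (c + u))
      + y *\<^sub>R ((1 - x) *\<^sub>R (c + v) + x *\<^sub>R (c + u + v)) \<in> ?H"
    by (rule convexD [OF convex_convex_hull]) (use assms in simp_all)
  moreover have "(1 - y) *\<^sub>R ((1 - x) *\<^sub>R c + x *\<^sub>R (c + u))
      + y *\<^sub>R ((1 - x) *\<^sub>R (c + v) + x *\<^sub>R (c + u + v)) = c + x *\<^sub>R u + y *\<^sub>R v"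
    by (simp add: algebra_simps)
  ultimately show ?thesis
    by simp
qed

lemma Pfund_representative: "\<exists>q. q \<in> Pfund \<and> p - q \<in> Lambda"
proof -
  define c u v :: "real \<times> real" where "c = (-3/2, sqrt 3 / 2)" and "u = (2, 0)" and "v = (1, - sqrt 3)"
  have Pfund: "Pfund = convex hull {c, c + u, c + v, c + u + v}"
    by (simp add: Pfund_def c_def u_def v_def insert_commute)
  define y where "y = - snd (p - c) / sqrt 3"
  define x where "x = (fst (p - c) - y) / 2"
  have "p - c = x *\<^sub>R u + y *\<^sub>R v"
    by (simp add: prod_eq_iff x_def y_def u_def v_def field_simps)
  then have "p - (c + frac x *\<^sub>R u + frac y *\<^sub>R v) = of_int \<lfloor>x\<rfloor> *\<^sub>R u + of_int \<lfloor>y\<rfloor> *\<^sub>R v"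
    by (simp add: frac_def algebra_simps)
  moreover have "c + frac x *\<^sub>R u + frac y *\<^sub>R v \<in> Pfund"
    unfolding Pfund by (intro parallelogram_in_convex_hull) (simp_all add: frac_ge_0 less_imp_le frac_lt_1)
  ultimately show ?thesis
    unfolding Lambda_def u_def v_def by blast
qed

lemma phi_congruent: "phi s p - p - phi_translation \<in> Lambda"
proof -
  define q where "q = (SOME q. q \<in> Pfund \<and> p - q \<in> Lambda)"
  have "q \<in> Pfund \<and> p - q \<in> Lambda"
    unfolding q_def using Pfund_representative by (rule someI_ex)
  then have qp: "q - p \<in> Lambda"
    using Lambda_uminus by fastforce
  have "(1, - sqrt 3) \<in> Lambda"
    unfolding Lambda_def by (rule CollectI, rule exI [of _ 0], rule exI [of _ 1]) simp
  show ?thesis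
  proof (cases "0 \<le> snd q")
    case True
    then have "phi s p - p - phi_translation = q - p"
      by (simp add: phi_def phi_translation_def q_def [symmetric])
    with qp show ?thesis
      by (simp only:)
  next
    case False
    then have "phi s p - p - phi_translation = (q - p) - (1, - sqrt 3)"
      by (simp add: phi_def phi_translation_def q_def [symmetric])
    with Lambda_diff [OF qp \<open>(1, - sqrt 3) \<in> Lambda\<close>] show ?thesis
      by (simp only:)
  qed
qed

lemma exists_generic_translates_near:
  assumes "e > 0"
  shows "\<exists>q\<in>ball p e. \<forall>k l::int. generic (q + tri_point (of_int k * s) (of_int l * s))"
proof -
  define a b where "a = coord_a p" and "b = coord_b p"
  define bad where "bad = {t::real. \<exists>k::int.
    a + t + of_int k * s \<in> \<int> \<or> b + t + of_int k * s \<in> \<int> \<or> a + b + 2 * t + of_int k * s \<in> \<int>}"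
  have "bad \<subseteq> (\<Union>k::int. (\<lambda>z. z - a - of_int k * s) ` \<int> \<union> (\<lambda>z. z - b - of_int k * s) ` \<int>
      \<union> (\<lambda>z. (z - a - b - of_int k * s) / 2) ` \<int>)"
    unfolding bad_def by (force simp: image_iff)
  then have "countable bad"
    by (rule countable_subset) (intro countable_UN countable_Un countable_image countable_int; simp)
  moreover have "uncountable {0<..<e/3}"
    using assms by (simp add: uncountable_open_interval)
  ultimately obtain t where t: "t \<in> {0<..<e/3}" "t \<notin> bad"
    by (metis Diff_iff countable_empty equals0I uncountable_minus_countable)
  have "norm (tri_point t t) \<le> 3 * t"
  proof -
    have "norm (tri_point t t) \<le> 3 * t / 2 + sqrt 3 * t / 2"
      using t(1) norm_Pair_le [of "3 * t / 2" "sqrt 3 * t / 2"] by (simp add: tri_point_def)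
    also have "\<dots> \<le> 3 * t"
    proof -
      have "sqrt 3 \<le> 3"
        using real_sqrt_le_iff [of 3 9] by simp
      then have "sqrt 3 * t \<le> 3 * t"
        using t(1) by (intro mult_right_mono) auto
      then show ?thesis
        by simp
    qed
    finally show ?thesis .
  qed
  then have "p + tri_point t t \<in> ball p e"
    using t(1) by (simp add: dist_norm)
  moreover have "generic (p + tri_point t t + tri_point (of_int k * s) (of_int l * s))" for k l
  proof -
    let ?x = "p + tri_point t t + tri_point (of_int k * s) (of_int l * s)"
    have coords: "coord_a ?x = a + t + of_int k * s" "coord_b ?x = b + t + of_int l * s"
      "coord_a ?x + coord_b ?x = a + b + 2 * t + of_int (k + l) * s"
      by (simp_all add: a_def b_def algebra_simps)
    have "\<forall>k::int. a + t + of_int k * s \<notin> \<int> \<and> b + t + of_int k * s \<notin> \<int>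
        \<and> a + b + 2 * t + of_int k * s \<notin> \<int>"
      using t(2) unfolding bad_def by blast
    then show ?thesis
      unfolding generic_def coords(3) unfolding coords(1,2) by blast
  qed
  ultimately show ?thesis
    by blast
qed

lemma exists_generic_orbit_near:
  assumes "e > 0"
  shows "\<exists>q\<in>ball p e. generic q \<and> generic (ftil s 0 q) \<and> generic (ftil s 1 (ftil s 0 q))"
proof -
  obtain q where "q \<in> ball p e" and gen: "\<And>k l::int. generic (q + tri_point (of_int k * s) (of_int l * s))"
    using exists_generic_translates_near [OF assms] by blast
  obtain e0 e1 :: int where "ftil s 0 q = q + (of_int e0 * s) *\<^sub>R omega 0"
    and "ftil s 1 (ftil s 0 q) = ftil s 0 q + (of_int e1 * s) *\<^sub>R omega 1"
    using ftil_sign by metis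
  then have "q = q + tri_point (of_int 0 * s) (of_int 0 * s)"
    "ftil s 0 q = q + tri_point (of_int e0 * s) (of_int 0 * s)"
    "ftil s 1 (ftil s 0 q) = q + tri_point (of_int (e0 - e1) * s) (of_int e1 * s)"
    by (simp_all add: eq_iff_coords algebra_simps)
  then show ?thesis
    using \<open>q \<in> ball p e\<close> gen by metis
qed

lemma pet_congruence_from_nearby:
  assumes "pet_defined u p" "pet_defined v (p + d)" "d - c \<in> Lambda"
    and nearby: "\<And>e. e > 0 \<Longrightarrow> \<exists>q\<in>ball p e. pet v (q + c) - pet u q - c \<in> Lambda"
  shows "pet v (p + d) - pet u p - c \<in> Lambda"
proof -
  obtain e1 where "e1 > 0" and near_p: "\<forall>q\<in>ball p e1. pet u q - pet u p - (q - p) \<in> Lambda"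
    using pet_defined_locally_congruent [of u p 0] assms(1) by auto
  obtain e2 where "e2 > 0" and near_pd: "\<forall>q\<in>ball p e2. pet v (q + d) - pet v (p + d) - (q - p) \<in> Lambda"
    using pet_defined_locally_congruent [of v p d] assms(2) by auto
  obtain q where q: "q \<in> ball p (min e1 e2)" and conj: "pet v (q + c) - pet u q - c \<in> Lambda"
    using nearby [of "min e1 e2"] \<open>e1 > 0\<close> \<open>e2 > 0\<close> by auto
  have "pet v (q + d) = pet v (q + c) + (d - c)"
    using pet_translate [OF assms(3), of v "q + c"] by simp
  then have "pet v (p + d) - pet u p - c = (pet v (q + c) - pet u q - c)
      + (pet u q - pet u p - (q - p)) - (pet v (q + d) - pet v (p + d) - (q - p)) + (d - c)"
    by (simp add: algebra_simps)
  also have "\<dots> \<in> Lambda"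
  proof -
    have "pet u q - pet u p - (q - p) \<in> Lambda" "pet v (q + d) - pet v (p + d) - (q - p) \<in> Lambda"
      using q near_p near_pd by simp_all
    then show ?thesis
      by (rule Lambda_add [OF Lambda_diff [OF Lambda_add [OF conj]] assms(3)])
  qed
  finally show ?thesis .
qed

theorem theorem2p2:
  fixes s :: real and p :: "real \<times> real"
  assumes "1/2 \<le> s" and "s < 1"
    and "pet_defined s p"
    and "pet_defined (1 - s) (phi s p)"
  shows "phi s (pet s p) - pet (1 - s) (phi s p) \<in> Lambda"
proof -
  have "pet (1 - s) (p + (phi s p - p)) - pet s p - phi_translation \<in> Lambda"
  proof (rule pet_congruence_from_nearby)
    fix e :: real
    assume "e > 0"
    then obtain q where "q \<in> ball p e" "generic q" "generic (ftil s 0 q)"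
      "generic (ftil s 1 (ftil s 0 q))"
      using exists_generic_orbit_near by blast
    then show "\<exists>q\<in>ball p e. pet (1 - s) (q + phi_translation) - pet s q - phi_translation \<in> Lambda"
      using pet_complement_generic by blast
  qed (use assms(3,4) phi_congruent in simp_all)
  then have "pet (1 - s) (phi s p) - pet s p - phi_translation \<in> Lambda"
    by simp
  with phi_congruent [of s "pet s p"] show ?thesis
    using Lambda_diff by fastforce
qed

end
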